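(* Let $s_0>1$, $\alpha\in(0,1/2)$, $h$ and $\widehat\psi$, $A$ be as in the context. For $\zeta\in\mathbb R$ and $x\in[-(2A)^{-1},(2A)^{-1}]$ define \[ \mathcal I_\zeta(x):=\int_{\mathbb R}e^{i\zeta\eta}\frac{|\widehat\psi(\eta)|^2\,h(x\eta)}{(s_0^2-x^2\eta^2)^{2\alpha}}\,d\eta . \] Then for each $\zeta$, $\mathcal I_\zeta$ is four times continuously differentiable on $[-(2A)^{-1},(2A)^{-1}]$, and there is a finite constant $c_1>0$, not depending on $\zeta$ and $x$, such that for all $\zeta\in\mathbb R$ and all $|x|\le(2A)^{-1}$, \[ \Big|\mathcal I_\zeta(x)-s_0^{-4\alpha}\int_{\mathbb R}e^{i\zeta\eta}|\widehat\psi(\eta)|^2d\eta-2\alpha s_0^{-4\alpha-2}\Big(\int_{\mathbb R}e^{i\zeta\eta}\eta^2|\widehat\psi(\eta)|^2d\eta\Big)x^2\Big|\le c_1x^4 . \]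
   Context: $s_0>1$, $\alpha\in(0,1/2)$, and $h$ is an even, non-negative, bounded, four times continuously differentiable function on $\mathbb R$ with $h^{(i)}(0)=0$ for $i=1,2,3,4$, $h(0)=1$, $h>0$ in some neighbourhood of $\pm s_0$, and $\int_{\mathbb R}h(\lambda)(1+|\lambda|)^{-\varepsilon}d\lambda<\infty$ for every $\varepsilon>0$. $\psi\in L_1(\mathbb R)$ is real-valued with Fourier transform $\widehat\psi(\lambda)=\int_{\mathbb R}e^{-i\lambda t}\psi(t)\,dt$ satisfying $\mathrm{supp}\,\widehat\psi\subset[-A,A]$ for some $A>0$, and $\widehat\psi$ is of bounded variation on $[-A,A]$. *)

theory Defs
  imports "HOL-Analysis.Analysis"
begin

definition fourier :: "(real \<Rightarrow> real) \<Rightarrow> real \<Rightarrow> complex" where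
  "fourier \<psi> l = (LINT t|lborel. exp (- \<i> * complex_of_real (l * t)) * complex_of_real (\<psi> t))"

definition bounded_variation_on :: "(real \<Rightarrow> 'a::real_normed_vector) \<Rightarrow> real \<Rightarrow> real \<Rightarrow> bool" where
  "bounded_variation_on f a b \<longleftrightarrow>
     (\<exists>M. \<forall>(n::nat) (t::nat \<Rightarrow> real).
        (\<forall>i\<le>n. t i \<in> {a..b}) \<and> (\<forall>i<n. t i \<le> t (Suc i)) \<longrightarrow>
        (\<Sum>i<n. norm (f (t (Suc i)) - f (t i))) \<le> M)"

definition Cn_on :: "nat \<Rightarrow> real set \<Rightarrow> (real \<Rightarrow> 'a::real_normed_vector) \<Rightarrow> bool" where
  "Cn_on n S f \<longleftrightarrow>
     (\<exists>D::nat \<Rightarrow> real \<Rightarrow> 'a. (\<forall>x\<in>S. D 0 x = f x) \<and>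
        (\<forall>k<n. \<forall>x\<in>S. (D k has_vector_derivative D (Suc k) x) (at x within S)) \<and>
        continuous_on S (D n))"

end

theory Submission
  imports Defs
begin

(*
  Put P u = h u * (s0^2 - u^2) powr (-2 alpha).  As fourier psi vanishes outside [-A, A], the
  integral I zeta x only involves P (x eta) with |x eta| <= 1/2 < s0, where P is C^4, so
  differentiating under the integral sign gives the regularity of I zeta.  By Taylor's theorem,
  h = 1 + O(u^4) (h is flat at 0) and (s0^2 - v) powr (-2 alpha) is smooth in v = u^2, hence
  P u = s0 powr (-4 alpha) + 2 alpha s0 powr (-4 alpha - 2) u^2 + O(u^4) on [-1/2, 1/2].
  Integrating against the weight exp (i zeta eta) |fourier psi eta|^2, whose modulus does not
  depend on zeta, gives the expansion with a uniform constant.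
*)

text \<open>Unlike \<^const>\<open>Cn_on\<close>, derivatives are two-sided, so the set should be open;
  in exchange the class is closed under products.\<close>

fun Ck_on :: "nat \<Rightarrow> real set \<Rightarrow> (real \<Rightarrow> real) \<Rightarrow> bool" where
  "Ck_on 0 T f \<longleftrightarrow> continuous_on T f"
| "Ck_on (Suc n) T f \<longleftrightarrow> (\<exists>f'. (\<forall>x\<in>T. (f has_real_derivative f' x) (at x)) \<and> Ck_on n T f')"

lemma Ck_on_imp_continuous_on:
  assumes "Ck_on n T f"
  shows "continuous_on T f"
proof (cases n)
  case 0
  with assms show ?thesis by simp
next
  case (Suc m)
  with assms obtain f' where "\<forall>x\<in>T. (f has_real_derivative f' x) (at x)"
    by auto
  then show ?thesis
    by (meson DERIV_isCont continuous_at_imp_continuous_on)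
qed

lemma Ck_on_SucI:
  "(\<And>x. x \<in> T \<Longrightarrow> (f has_real_derivative f' x) (at x)) \<Longrightarrow> Ck_on n T f' \<Longrightarrow> Ck_on (Suc n) T f"
  by auto

lemma Ck_on_SucD: "Ck_on (Suc n) T f \<Longrightarrow> Ck_on n T f"
proof (induction n arbitrary: f)
  case 0
  show ?case
    using Ck_on_imp_continuous_on[OF "0.prems"] by simp
next
  case (Suc n)
  then obtain f' where "\<forall>x\<in>T. (f has_real_derivative f' x) (at x)" "Ck_on (Suc n) T f'"
    by auto
  with Suc.IH show ?case by auto
qed

lemma Ck_on_const: "Ck_on n T (\<lambda>x. c)"
  by (induction n arbitrary: c) (auto intro!: exI[of _ "\<lambda>x. 0"])

lemma Ck_on_ident: "Ck_on n T (\<lambda>x. x)"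
  by (cases n) (auto intro!: exI[of _ "\<lambda>x. 1"] Ck_on_const)

lemma Ck_on_add: "Ck_on n T f \<Longrightarrow> Ck_on n T g \<Longrightarrow> Ck_on n T (\<lambda>x. f x + g x)"
proof (induction n arbitrary: f g)
  case 0
  then show ?case by (auto intro: continuous_on_add)
next
  case (Suc n)
  then obtain f' g' where "\<forall>x\<in>T. (f has_real_derivative f' x) (at x)" "Ck_on n T f'"
    and "\<forall>x\<in>T. (g has_real_derivative g' x) (at x)" "Ck_on n T g'"
    by auto
  with Suc.IH show ?case by (auto intro!: exI[of _ "\<lambda>x. f' x + g' x"] DERIV_add)
qed

lemma Ck_on_mult: "Ck_on n T f \<Longrightarrow> Ck_on n T g \<Longrightarrow> Ck_on n T (\<lambda>x. f x * g x)"
proof (induction n arbitrary: f g)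
  case 0
  then show ?case by (auto intro: continuous_on_mult)
next
  case (Suc n)
  then obtain f' g' where f': "\<forall>x\<in>T. (f has_real_derivative f' x) (at x)" "Ck_on n T f'"
    and g': "\<forall>x\<in>T. (g has_real_derivative g' x) (at x)" "Ck_on n T g'"
    by auto
  have "Ck_on n T (\<lambda>x. f' x * g x + g' x * f x)"
    using Ck_on_SucD[OF Suc.prems(1)] Ck_on_SucD[OF Suc.prems(2)]
    by (intro Ck_on_add Suc.IH f'(2) g'(2))
  with f' g' show ?case by (auto intro!: exI[of _ "\<lambda>x. f' x * g x + g' x * f x"] DERIV_mult)
qed

lemma Ck_on_subset: "Ck_on n T f \<Longrightarrow> S \<subseteq> T \<Longrightarrow> Ck_on n S f"
proof (induction n arbitrary: f)
  case 0
  then show ?case by (auto intro: continuous_on_subset)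
next
  case (Suc n)
  then obtain f' where "\<forall>x\<in>T. (f has_real_derivative f' x) (at x)" "Ck_on n T f'"
    by auto
  with Suc show ?case by auto
qed

lemma Ck_on_derivatives:
  assumes "Ck_on n T f"
  obtains D where "D 0 = f"
    and "\<And>k x. k < n \<Longrightarrow> x \<in> T \<Longrightarrow> (D k has_real_derivative D (Suc k) x) (at x)"
    and "\<And>k. k \<le> n \<Longrightarrow> continuous_on T (D k)"
  using assms
proof (induction n arbitrary: f thesis)
  case 0
  then show ?case by auto
next
  case (Suc n)
  then obtain f' where f': "\<forall>x\<in>T. (f has_real_derivative f' x) (at x)" "Ck_on n T f'"
    by auto
  obtain D where D: "D 0 = f'"
    "\<And>k x. k < n \<Longrightarrow> x \<in> T \<Longrightarrow> (D k has_real_derivative D (Suc k) x) (at x)"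
    "\<And>k. k \<le> n \<Longrightarrow> continuous_on T (D k)"
    using Suc.IH[OF _ f'(2)] by blast
  show ?case
  proof (rule Suc.prems(1)[of "case_nat f D"])
    show "(case_nat f D k has_real_derivative case_nat f D (Suc k) x) (at x)"
      if "k < Suc n" "x \<in> T" for k x
      using that f'(1) D by (cases k) auto
    show "continuous_on T (case_nat f D k)" if "k \<le> Suc n" for k
      using that D Ck_on_imp_continuous_on[OF Suc.prems(2)] by (cases k) auto
  qed simp
qed

lemma Ck_on_powr_diff_square:
  fixes s :: real
  assumes "s > 0"
  shows "Ck_on n {-s<..<s} (\<lambda>u. (s\<^sup>2 - u\<^sup>2) powr \<beta>)"
proof -
  have pos: "s\<^sup>2 - u\<^sup>2 > 0" if "u \<in> {-s<..<s}" for u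
  proof -
    have "0 < (s - u) * (s + u)"
      using that by (intro mult_pos_pos) auto
    then show ?thesis by (simp add: power2_eq_square algebra_simps)
  qed
  show ?thesis
  proof (induction n arbitrary: \<beta>)
    case 0
    have "\<forall>u\<in>{-s<..<s}. s\<^sup>2 - u\<^sup>2 \<noteq> 0"
      using pos by force
    then show ?case
      by (auto intro!: continuous_intros)
  next
    case (Suc n)
    have "((\<lambda>u. (s\<^sup>2 - u\<^sup>2) powr \<beta>) has_real_derivative
        (s\<^sup>2 - u\<^sup>2) powr (\<beta> - 1) * (-2 * \<beta> * u)) (at u)" if "u \<in> {-s<..<s}" for u
      using pos[OF that] by (auto intro!: derivative_eq_intros)
    moreover have "Ck_on n {-s<..<s} (\<lambda>u. (s\<^sup>2 - u\<^sup>2) powr (\<beta> - 1) * (-2 * \<beta> * u))"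
      by (rule Ck_on_mult[OF Suc.IH Ck_on_mult[OF Ck_on_const Ck_on_ident]])
    ultimately show ?case
      by (rule Ck_on_SucI)
  qed
qed

lemma Ck_on_iterated_deriv:
  fixes f :: "real \<Rightarrow> real"
  assumes "\<And>k x. k < n \<Longrightarrow> (deriv ^^ k) f differentiable (at x)"
    and "continuous_on UNIV ((deriv ^^ n) f)"
  shows "Ck_on n UNIV f"
proof -
  have "Ck_on j UNIV ((deriv ^^ (n - j)) f)" if "j \<le> n" for j
    using that
  proof (induction j)
    case 0
    then show ?case using assms(2) by simp
  next
    case (Suc j)
    then have "n - j = Suc (n - Suc j)"
      by simp
    then have "((deriv ^^ (n - Suc j)) f has_real_derivative (deriv ^^ (n - j)) f x) (at x)" for x
      using assms(1)[of "n - Suc j" x] Suc.prems by (simp add: DERIV_deriv_iff_real_differentiable)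
    with Suc show ?case by (intro Ck_on_SucI) auto
  qed
  from this[of n] show ?thesis by simp
qed

lemma Cn_on_subset_cong:
  assumes "Cn_on n U f" "S \<subseteq> U" "\<And>x. x \<in> S \<Longrightarrow> g x = f x"
  shows "Cn_on n S g"
proof -
  obtain D where D0: "\<forall>x\<in>U. D 0 x = f x"
    and D': "\<forall>k<n. \<forall>x\<in>U. (D k has_vector_derivative D (Suc k) x) (at x within U)"
    and Dn: "continuous_on U (D n)"
    using assms(1) unfolding Cn_on_def by blast
  show ?thesis
    unfolding Cn_on_def
  proof (intro exI[of _ D] conjI ballI allI impI)
    show "D 0 x = g x" if "x \<in> S" for x
      using D0 assms(2,3) that by auto
    show "(D k has_vector_derivative D (Suc k) x) (at x within S)" if "k < n" "x \<in> S" for k x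
      using D' assms(2) that by (blast intro: has_vector_derivative_within_subset)
    show "continuous_on S (D n)"
      using Dn assms(2) by (rule continuous_on_subset)
  qed
qed

lemma Cn_on_integral_dilation:
  fixes w :: "real \<Rightarrow> complex" and P :: "real \<Rightarrow> real"
  assumes P: "Ck_on n T P" and w: "continuous_on {a..b} w" and U: "convex U"
    and dilate: "\<And>x \<eta>. x \<in> U \<Longrightarrow> \<eta> \<in> {a..b} \<Longrightarrow> x * \<eta> \<in> T"
  shows "Cn_on n U (\<lambda>x. integral {a..b} (\<lambda>\<eta>. w \<eta> * of_real (P (x * \<eta>))))"
proof -
  obtain D where D0: "D 0 = P"
    and D': "\<And>k x. k < n \<Longrightarrow> x \<in> T \<Longrightarrow> (D k has_real_derivative D (Suc k) x) (at x)"
    and Dc: "\<And>k. k \<le> n \<Longrightarrow> continuous_on T (D k)"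
    using Ck_on_derivatives[OF P] by blast
  define K where "K k x \<eta> = w \<eta> * of_real (\<eta> ^ k * D k (x * \<eta>))" for k x \<eta>
  have K_cont: "continuous_on (U \<times> {a..b}) (\<lambda>(x, \<eta>). K k x \<eta>)" if "k \<le> n" for k
  proof -
    have "continuous_on (U \<times> {a..b}) (\<lambda>p. D k (fst p * snd p))"
      by (rule continuous_on_compose2[OF Dc[OF that]]) (use dilate in \<open>auto intro!: continuous_intros\<close>)
    moreover have "continuous_on (U \<times> {a..b}) (\<lambda>p. w (snd p))"
      by (rule continuous_on_compose2[OF w]) (auto intro!: continuous_intros)
    ultimately show ?thesis
      unfolding K_def case_prod_unfold by (auto intro!: continuous_intros)
  qed
  have K_integrable: "K k x integrable_on {a..b}" if "k \<le> n" "x \<in> U" for k x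
  proof (rule integrable_continuous_interval)
    have "(\<lambda>\<eta>. x * \<eta>) ` {a..b} \<subseteq> T"
      using dilate that(2) by auto
    then have "continuous_on {a..b} (\<lambda>\<eta>. D k (x * \<eta>))"
      by (rule continuous_on_compose2[OF Dc[OF that(1)], rotated]) (auto intro!: continuous_intros)
    with w show "continuous_on {a..b} (K k x)"
      unfolding K_def by (auto intro!: continuous_intros)
  qed
  have K_deriv: "((\<lambda>x. K k x \<eta>) has_vector_derivative K (Suc k) x \<eta>) (at x within U)"
    if "k < n" "x \<in> U" "\<eta> \<in> {a..b}" for k x \<eta>
  proof -
    have "((\<lambda>x. D k (x * \<eta>)) has_real_derivative D (Suc k) (x * \<eta>) * \<eta>) (at x)"
      by (rule DERIV_chain2[where g = "\<lambda>x. x * \<eta>", OF D'[OF that(1) dilate[OF that(2,3)]]])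
        (auto intro!: derivative_eq_intros)
    from DERIV_cmult[OF this, of "\<eta> ^ k"]
    have "((\<lambda>x. \<eta> ^ k * D k (x * \<eta>)) has_real_derivative \<eta> ^ Suc k * D (Suc k) (x * \<eta>)) (at x)"
      by (simp only: power_Suc2 mult_ac)
    then show ?thesis
      unfolding K_def
      by (intro has_vector_derivative_at_within[OF has_vector_derivative_mult_right]
          has_vector_derivative_of_real)
  qed
  show ?thesis
    unfolding Cn_on_def
  proof (intro exI[of _ "\<lambda>k x. integral {a..b} (K k x)"] conjI ballI allI impI)
    show "integral {a..b} (K 0 x) = integral {a..b} (\<lambda>\<eta>. w \<eta> * of_real (P (x * \<eta>)))" for x
      by (simp add: K_def[abs_def] D0)
    show "((\<lambda>x. integral {a..b} (K k x)) has_vector_derivative integral {a..b} (K (Suc k) x))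
        (at x within U)" if "k < n" "x \<in> U" for k x
      by (rule leibniz_rule_vector_derivative[of U a b "K k" "K (Suc k)", unfolded cbox_interval])
        (use K_deriv K_integrable K_cont that U in auto)
    show "continuous_on U (\<lambda>x. integral {a..b} (K n x))"
      using integral_continuous_on_param[OF K_cont[of n, folded cbox_interval]] by simp
  qed
qed

lemma continuous_on_fourier:
  assumes "integrable lborel \<psi>"
  shows "continuous_on UNIV (fourier \<psi>)"
proof -
  have "(fourier \<psi> \<circ> X) \<longlonglongrightarrow> fourier \<psi> l" if "X \<longlonglongrightarrow> l" for X l
    unfolding comp_def fourier_def
  proof (rule integral_dominated_convergence[where w = "\<lambda>t. \<bar>\<psi> t\<bar>"])
    show "integrable lborel (\<lambda>t. \<bar>\<psi> t\<bar>)"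
      using assms by auto
    show "AE t in lborel. (\<lambda>i. exp (- \<i> * complex_of_real (X i * t)) * complex_of_real (\<psi> t))
        \<longlonglongrightarrow> exp (- \<i> * complex_of_real (l * t)) * complex_of_real (\<psi> t)"
      using that by (intro AE_I2 tendsto_intros)
    show "AE t in lborel. norm (exp (- \<i> * complex_of_real (X i * t)) * complex_of_real (\<psi> t)) \<le> \<bar>\<psi> t\<bar>"
      for i
    proof (rule AE_I2)
      fix t
      have "exp (- \<i> * complex_of_real (X i * t)) = exp (\<i> * complex_of_real (- (X i * t)))"
        by simp
      then show "norm (exp (- \<i> * complex_of_real (X i * t)) * complex_of_real (\<psi> t)) \<le> \<bar>\<psi> t\<bar>"
        by (simp only: norm_mult norm_exp_i_times norm_of_real)
    qed
    have "\<psi> \<in> borel_measurable borel"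
      using assms by auto
    then show "(\<lambda>t. exp (- \<i> * complex_of_real (c * t)) * complex_of_real (\<psi> t)) \<in> borel_measurable lborel"
      for c
      by (intro borel_measurable_times borel_measurable_continuous_onI continuous_intros) auto
    then show "(\<lambda>t. exp (- \<i> * complex_of_real (X i * t)) * complex_of_real (\<psi> t)) \<in> borel_measurable lborel"
      for i .
  qed
  then show ?thesis
    by (simp add: continuous_at_sequentially continuous_at_imp_continuous_on)
qed

lemma integral_lborel_eq_integral_Icc:
  fixes f :: "real \<Rightarrow> 'a::euclidean_space"
  assumes "continuous_on {a..b} f" "\<And>t. t \<notin> {a..b} \<Longrightarrow> f t = 0"
  shows "(LINT t|lborel. f t) = integral {a..b} f"
proof -
  have "(\<lambda>t. indicator {a..b} t *\<^sub>R f t) = f"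
    using assms(2) by (auto simp: indicator_def)
  then have "(LINT t|lborel. f t) = (LINT t:{a..b}|lborel. f t)"
    by (simp add: set_lebesgue_integral_def)
  also have "\<dots> = integral {a..b} f"
    by (intro set_borel_integral_eq_integral borel_integrable_atLeastAtMost' assms(1))
  finally show ?thesis .
qed

lemma Cn_on_lborel_integral_dilation:
  fixes w :: "real \<Rightarrow> complex" and P :: "real \<Rightarrow> real"
  assumes P: "Ck_on n {-s<..<s} P" and w: "continuous_on {-A..A} w"
    and w_vanish: "\<And>\<eta>. \<eta> \<notin> {-A..A} \<Longrightarrow> w \<eta> = 0" and "A > 0"
  shows "Cn_on n {-s/A<..<s/A} (\<lambda>x. LINT \<eta>|lborel. w \<eta> * of_real (P (x * \<eta>)))"
proof -
  have dilate: "x * \<eta> \<in> {-s<..<s}" if "x \<in> {-s/A<..<s/A}" "\<eta> \<in> {-A..A}" for x \<eta>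
  proof -
    have "\<bar>x * \<eta>\<bar> \<le> \<bar>x\<bar> * A"
      using that(2) by (auto simp: abs_mult intro: mult_left_mono)
    also have "\<dots> < s"
      using that(1) \<open>A > 0\<close> by (auto simp: field_simps)
    finally show ?thesis
      by auto
  qed
  have "Cn_on n {-s/A<..<s/A} (\<lambda>x. integral {-A..A} (\<lambda>\<eta>. w \<eta> * of_real (P (x * \<eta>))))"
    using dilate by (intro Cn_on_integral_dilation[OF P w]) auto
  moreover have "(LINT \<eta>|lborel. w \<eta> * of_real (P (x * \<eta>)))
      = integral {-A..A} (\<lambda>\<eta>. w \<eta> * of_real (P (x * \<eta>)))" if "x \<in> {-s/A<..<s/A}" for x
  proof (rule integral_lborel_eq_integral_Icc)
    have "(\<lambda>\<eta>. x * \<eta>) ` {-A..A} \<subseteq> {-s<..<s}"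
      using dilate[OF that] by auto
    then have "continuous_on {-A..A} (\<lambda>\<eta>. P (x * \<eta>))"
      by (rule continuous_on_compose2[OF Ck_on_imp_continuous_on[OF P], rotated])
        (auto intro!: continuous_intros)
    with w show "continuous_on {-A..A} (\<lambda>\<eta>. w \<eta> * of_real (P (x * \<eta>)))"
      by (auto intro!: continuous_intros)
  qed (simp add: w_vanish)
  ultimately show ?thesis
    by (rule Cn_on_subset_cong[OF _ subset_refl])
qed

lemma taylor_remainder_bound:
  fixes f :: "real \<Rightarrow> real" and D :: "nat \<Rightarrow> real \<Rightarrow> real"
  assumes "n > 0" "D 0 = f"
    and D': "\<And>m t. m < n \<Longrightarrow> t \<in> {-r..r} \<Longrightarrow> (D m has_real_derivative D (Suc m) t) (at t)"
    and Dn: "continuous_on {-r..r} (D n)"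
  obtains M where "M \<ge> 0"
    "\<And>u. u \<in> {-r..r} \<Longrightarrow> \<bar>f u - (\<Sum>m<n. D m 0 / fact m * u ^ m)\<bar> \<le> M * \<bar>u\<bar> ^ n"
proof -
  obtain M where M: "M \<ge> 0" "\<And>t. t \<in> {-r..r} \<Longrightarrow> \<bar>D n t\<bar> \<le> M"
    using continuous_on_compact_bound[OF compact_Icc Dn] by (metis real_norm_def)
  have "\<bar>f u - (\<Sum>m<n. D m 0 / fact m * u ^ m)\<bar> \<le> M * \<bar>u\<bar> ^ n" if u: "u \<in> {-r..r}" for u
  proof (cases "u = 0")
    case True
    then show ?thesis
      using \<open>n > 0\<close> \<open>D 0 = f\<close> by (cases n) (simp_all add: sum.lessThan_Suc_shift)
  next
    case False
    have "\<exists>t. (if u < 0 then u < t \<and> t < 0 else 0 < t \<and> t < u) \<and>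
        f u = (\<Sum>m<n. D m 0 / fact m * (u - 0) ^ m) + D n t / fact n * (u - 0) ^ n"
      by (rule Taylor[of n D f "-r" r 0 u]) (use assms(1,2) D' u False in auto)
    then obtain t where t: "if u < 0 then u < t \<and> t < 0 else 0 < t \<and> t < u"
      and taylor: "f u = (\<Sum>m<n. D m 0 / fact m * u ^ m) + D n t / fact n * u ^ n"
      by auto
    have "t \<in> {-r..r}"
      using t u by (auto split: if_splits)
    have "\<bar>f u - (\<Sum>m<n. D m 0 / fact m * u ^ m)\<bar> = \<bar>D n t\<bar> / fact n * \<bar>u\<bar> ^ n"
      by (simp add: taylor abs_mult power_abs)
    also have "\<dots> \<le> M * \<bar>u\<bar> ^ n"
    proof (rule mult_right_mono)
      have "\<bar>D n t\<bar> / fact n \<le> \<bar>D n t\<bar> / 1"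
        by (rule divide_left_mono) auto
      also have "\<dots> \<le> M"
        using M(2) \<open>t \<in> {-r..r}\<close> by simp
      finally show "\<bar>D n t\<bar> / fact n \<le> M" .
    qed simp
    finally show ?thesis .
  qed
  with M(1) show thesis by (rule that)
qed

lemma taylor_remainder_bound_flat:
  fixes f :: "real \<Rightarrow> real"
  assumes "n > 0"
    and diff: "\<And>k x. k < n \<Longrightarrow> (deriv ^^ k) f differentiable (at x)"
    and cont: "continuous_on UNIV ((deriv ^^ n) f)"
    and flat: "\<And>k. 0 < k \<Longrightarrow> k < n \<Longrightarrow> (deriv ^^ k) f 0 = 0"
  obtains M where "M \<ge> 0" "\<And>u. u \<in> {-r..r} \<Longrightarrow> \<bar>f u - f 0\<bar> \<le> M * \<bar>u\<bar> ^ n"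
proof -
  have "(\<Sum>m<n. (deriv ^^ m) f 0 / fact m * u ^ m) = f 0" for u
  proof -
    obtain n' where n: "n = Suc n'"
      using \<open>n > 0\<close> gr0_implies_Suc by blast
    have "(deriv ^^ Suc m) f 0 = 0" if "m < n'" for m
      using flat[of "Suc m"] n that by simp
    then show ?thesis
      unfolding n sum.lessThan_Suc_shift by simp
  qed
  note sum_eq = this
  show thesis
  proof (rule taylor_remainder_bound[of n "\<lambda>m. (deriv ^^ m) f" f r])
    show "((deriv ^^ m) f has_real_derivative (deriv ^^ Suc m) f t) (at t)" if "m < n" for m t
      using diff[OF that] by (simp add: DERIV_deriv_iff_real_differentiable)
    show "continuous_on {-r..r} ((deriv ^^ n) f)"
      using cont by (rule continuous_on_subset) simp
    fix M :: real
    assume "M \<ge> 0" "\<And>u. u \<in> {-r..r} \<Longrightarrow>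
      \<bar>f u - (\<Sum>m<n. (deriv ^^ m) f 0 / fact m * u ^ m)\<bar> \<le> M * \<bar>u\<bar> ^ n"
    then show thesis
      unfolding sum_eq by (rule that)
  qed (use \<open>n > 0\<close> in simp_all)
qed

lemma powr_diff_square_expansion:
  fixes s r \<beta> :: real
  assumes "0 \<le> r" "r < s"
  obtains N where "N \<ge> 0" "\<And>u. \<bar>u\<bar> \<le> r \<Longrightarrow>
    \<bar>(s\<^sup>2 - u\<^sup>2) powr \<beta> - s powr (2 * \<beta>) + \<beta> * s powr (2 * \<beta> - 2) * u\<^sup>2\<bar> \<le> N * u ^ 4"
proof -
  \<comment> \<open>D m is the m-th derivative of v \<mapsto> (s^2 - v) powr \<beta>; expand to second order in v = u^2.\<close>
  define D where "D m v = pochhammer (- \<beta>) m * (s\<^sup>2 - v) powr (\<beta> - m)" for m v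
  have "r\<^sup>2 < s\<^sup>2"
    using assms by (intro power_strict_mono) auto
  then have pos: "s\<^sup>2 - v > 0" if "v \<in> {-r\<^sup>2..r\<^sup>2}" for v
    using that by simp
  have "(D m has_real_derivative D (Suc m) v) (at v)" if "v \<in> {-r\<^sup>2..r\<^sup>2}" for m v
  proof -
    have "((\<lambda>v. s\<^sup>2 - v) has_real_derivative -1) (at v)"
      by (auto intro!: derivative_eq_intros)
    from DERIV_cmult[OF DERIV_fun_powr[OF this pos[OF that], of "\<beta> - m"], of "pochhammer (- \<beta>) m"]
    show ?thesis
      unfolding D_def by (simp add: pochhammer_rec' algebra_simps)
  qed
  moreover have "continuous_on {-r\<^sup>2..r\<^sup>2} (D 2)"
  proof -
    have "\<forall>v\<in>{-r\<^sup>2..r\<^sup>2}. s\<^sup>2 - v \<noteq> 0"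
      using pos by force
    then show ?thesis
      unfolding D_def by (auto intro!: continuous_intros)
  qed
  ultimately obtain N where N: "N \<ge> 0"
    "\<And>v. v \<in> {-r\<^sup>2..r\<^sup>2} \<Longrightarrow> \<bar>D 0 v - (\<Sum>m<2. D m 0 / fact m * v ^ m)\<bar> \<le> N * \<bar>v\<bar> ^ 2"
    using taylor_remainder_bound[of 2 D "D 0" "r\<^sup>2"] by auto
  have "(s\<^sup>2) powr x = s powr (2 * x)" for x
  proof -
    have "(s\<^sup>2) powr x = (s powr 2) powr x"
      using assms by simp
    then show ?thesis
      by (simp only: powr_powr)
  qed
  then have taylor_poly: "(\<Sum>m<2. D m 0 / fact m * v ^ m) = s powr (2 * \<beta>) - \<beta> * s powr (2 * \<beta> - 2) * v"
    for v
    by (simp add: D_def numeral_2_eq_2 algebra_simps)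
  show thesis
  proof (rule that[OF N(1)])
    fix u :: real
    assume "\<bar>u\<bar> \<le> r"
    then have "u\<^sup>2 \<le> r\<^sup>2"
      using abs_le_square_iff[of u r] \<open>0 \<le> r\<close> by simp
    moreover have "0 \<le> u\<^sup>2"
      by simp
    ultimately have "u\<^sup>2 \<in> {-r\<^sup>2..r\<^sup>2}"
      unfolding atLeastAtMost_iff by linarith
    from N(2)[OF this, unfolded taylor_poly]
    show "\<bar>(s\<^sup>2 - u\<^sup>2) powr \<beta> - s powr (2 * \<beta>) + \<beta> * s powr (2 * \<beta> - 2) * u\<^sup>2\<bar> \<le> N * u ^ 4"
      by (simp add: D_def diff_diff_eq2 flip: power_mult)
  qed
qed

lemma flat_mult_powr_diff_square_expansion:
  fixes f :: "real \<Rightarrow> real" and s r \<beta> :: real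
  assumes "0 \<le> r" "r < s"
    and diff: "\<And>k x. k < 4 \<Longrightarrow> (deriv ^^ k) f differentiable (at x)"
    and cont: "continuous_on UNIV ((deriv ^^ 4) f)"
    and flat: "\<And>k. 0 < k \<Longrightarrow> k < 4 \<Longrightarrow> (deriv ^^ k) f 0 = 0"
    and "f 0 = 1"
  obtains C where "C \<ge> 0" "\<And>u. \<bar>u\<bar> \<le> r \<Longrightarrow>
    \<bar>f u * (s\<^sup>2 - u\<^sup>2) powr \<beta> - s powr (2 * \<beta>) + \<beta> * s powr (2 * \<beta> - 2) * u\<^sup>2\<bar> \<le> C * u ^ 4"
proof -
  obtain M where M: "M \<ge> 0" "\<And>u. u \<in> {-r..r} \<Longrightarrow> \<bar>f u - f 0\<bar> \<le> M * \<bar>u\<bar> ^ 4"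
    using taylor_remainder_bound_flat[of 4 f r] diff cont flat by auto
  obtain N where N: "N \<ge> 0" "\<And>u. \<bar>u\<bar> \<le> r \<Longrightarrow>
      \<bar>(s\<^sup>2 - u\<^sup>2) powr \<beta> - s powr (2 * \<beta>) + \<beta> * s powr (2 * \<beta> - 2) * u\<^sup>2\<bar> \<le> N * u ^ 4"
    using powr_diff_square_expansion[OF assms(1,2)] by blast
  have "continuous_on {-s<..<s} (\<lambda>u. (s\<^sup>2 - u\<^sup>2) powr \<beta>)"
    using assms(1,2) by (intro Ck_on_imp_continuous_on[of 0] Ck_on_powr_diff_square) simp
  then have "continuous_on {-r..r} (\<lambda>u. (s\<^sup>2 - u\<^sup>2) powr \<beta>)"
    by (rule continuous_on_subset) (use assms(2) in auto)
  then obtain B where B: "B \<ge> 0" "\<And>u. u \<in> {-r..r} \<Longrightarrow> \<bar>(s\<^sup>2 - u\<^sup>2) powr \<beta>\<bar> \<le> B"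
    using continuous_on_compact_bound[OF compact_Icc] by (metis real_norm_def)
  show thesis
  proof (rule that[of "M * B + N"])
    show "M * B + N \<ge> 0"
      using M B N by simp
    fix u :: real
    assume u: "\<bar>u\<bar> \<le> r"
    define q where "q = (s\<^sup>2 - u\<^sup>2) powr \<beta>"
    \<comment> \<open>Split the remainder as (f u - 1) q + (q - s powr (2 \<beta>) + \<beta> s powr (2 \<beta> - 2) u^2).\<close>
    have "u \<in> {-r..r}"
      using u by auto
    then have "\<bar>f u - 1\<bar> \<le> M * u ^ 4" "\<bar>q\<bar> \<le> B"
      using M(2) B(2) \<open>f 0 = 1\<close> by (auto simp: q_def)
    then have "\<bar>(f u - 1) * q\<bar> \<le> M * u ^ 4 * B"
      unfolding abs_mult using M(1) by (intro mult_mono) auto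
    moreover have "\<bar>q - s powr (2 * \<beta>) + \<beta> * s powr (2 * \<beta> - 2) * u\<^sup>2\<bar> \<le> N * u ^ 4"
      unfolding q_def by (rule N(2)[OF u])
    ultimately show "\<bar>f u * (s\<^sup>2 - u\<^sup>2) powr \<beta> - s powr (2 * \<beta>) + \<beta> * s powr (2 * \<beta> - 2) * u\<^sup>2\<bar>
        \<le> (M * B + N) * u ^ 4"
      unfolding q_def[symmetric] by (simp add: abs_le_iff algebra_simps)
  qed
qed

lemma lborel_integral_dilation_expansion_bound:
  fixes w :: "real \<Rightarrow> complex" and P :: "real \<Rightarrow> real"
  assumes w: "continuous_on {-A..A} w" and w_vanish: "\<And>\<eta>. \<eta> \<notin> {-A..A} \<Longrightarrow> w \<eta> = 0"
    and P: "continuous_on {-r..r} P"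
    and expansion: "\<And>u. \<bar>u\<bar> \<le> r \<Longrightarrow> \<bar>P u - a - b * u\<^sup>2\<bar> \<le> C * u ^ 4"
    and x: "\<bar>x\<bar> * A \<le> r"
  shows "norm ((LINT \<eta>|lborel. w \<eta> * of_real (P (x * \<eta>)))
      - of_real a * (LINT \<eta>|lborel. w \<eta>)
      - of_real b * (LINT \<eta>|lborel. w \<eta> * of_real (\<eta>\<^sup>2)) * of_real (x\<^sup>2))
    \<le> C * x ^ 4 * integral {-A..A} (\<lambda>\<eta>. norm (w \<eta>) * \<eta> ^ 4)"
proof -
  have dilate: "\<bar>x * \<eta>\<bar> \<le> r" if "\<eta> \<in> {-A..A}" for \<eta>
  proof -
    have "\<bar>x * \<eta>\<bar> \<le> \<bar>x\<bar> * A"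
      using that by (auto simp: abs_mult intro: mult_left_mono)
    with x show ?thesis
      by linarith
  qed
  define R where "R \<eta> = P (x * \<eta>) - a - b * (x * \<eta>)\<^sup>2" for \<eta>
  have "(\<lambda>\<eta>. x * \<eta>) ` {-A..A} \<subseteq> {-r..r}"
    using dilate by (force simp: abs_le_iff)
  then have Px_cont: "continuous_on {-A..A} (\<lambda>\<eta>. P (x * \<eta>))"
    by (rule continuous_on_compose2[OF P, rotated]) (auto intro!: continuous_intros)
  then have P_cont: "continuous_on {-A..A} (\<lambda>\<eta>. w \<eta> * of_real (P (x * \<eta>)))"
    using w by (auto intro!: continuous_intros)
  from Px_cont have R_cont: "continuous_on {-A..A} (\<lambda>\<eta>. w \<eta> * of_real (R \<eta>))"
    unfolding R_def using w by (auto intro!: continuous_intros)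
  have sq_cont: "continuous_on {-A..A} (\<lambda>\<eta>. w \<eta> * of_real (\<eta>\<^sup>2))"
    using w by (auto intro!: continuous_intros)
  have R_eq: "w \<eta> * of_real (R \<eta>) = w \<eta> * of_real (P (x * \<eta>))
      - of_real a * w \<eta> - of_real b * (w \<eta> * of_real (\<eta>\<^sup>2)) * of_real (x\<^sup>2)" for \<eta>
    by (simp add: R_def algebra_simps power_mult_distrib)
  have "(LINT \<eta>|lborel. w \<eta> * of_real (P (x * \<eta>)))
      - of_real a * (LINT \<eta>|lborel. w \<eta>)
      - of_real b * (LINT \<eta>|lborel. w \<eta> * of_real (\<eta>\<^sup>2)) * of_real (x\<^sup>2)
    = integral {-A..A} (\<lambda>\<eta>. w \<eta> * of_real (P (x * \<eta>)))
      - of_real a * integral {-A..A} w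
      - of_real b * integral {-A..A} (\<lambda>\<eta>. w \<eta> * of_real (\<eta>\<^sup>2)) * of_real (x\<^sup>2)"
    using integral_lborel_eq_integral_Icc[OF P_cont] integral_lborel_eq_integral_Icc[OF w]
      integral_lborel_eq_integral_Icc[OF sq_cont] by (simp add: w_vanish)
  also have "\<dots> = integral {-A..A} (\<lambda>\<eta>. w \<eta> * of_real (R \<eta>))"
    unfolding R_eq using P_cont sq_cont w
    by (simp add: integral_diff integral_mult_left integral_mult_right integrable_continuous_interval
        continuous_intros)
  also have "norm \<dots> \<le> integral {-A..A} (\<lambda>\<eta>. C * x ^ 4 * (norm (w \<eta>) * \<eta> ^ 4))"
  proof (rule integral_norm_bound_integral)
    show "(\<lambda>\<eta>. w \<eta> * of_real (R \<eta>)) integrable_on {-A..A}"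
      by (rule integrable_continuous_interval[OF R_cont])
    show "(\<lambda>\<eta>. C * x ^ 4 * (norm (w \<eta>) * \<eta> ^ 4)) integrable_on {-A..A}"
      using w by (auto intro!: integrable_continuous_interval continuous_intros)
    show "norm (w \<eta> * of_real (R \<eta>)) \<le> C * x ^ 4 * (norm (w \<eta>) * \<eta> ^ 4)"
      if "\<eta> \<in> {-A..A}" for \<eta>
    proof -
      have "\<bar>R \<eta>\<bar> \<le> C * (x * \<eta>) ^ 4"
        unfolding R_def by (rule expansion[OF dilate[OF that]])
      then have "norm (w \<eta>) * \<bar>R \<eta>\<bar> \<le> norm (w \<eta>) * (C * (x * \<eta>) ^ 4)"
        by (rule mult_left_mono) simp
      then show ?thesis
        by (simp add: norm_mult power_mult_distrib ac_simps)
    qed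
  qed
  also have "\<dots> = C * x ^ 4 * integral {-A..A} (\<lambda>\<eta>. norm (w \<eta>) * \<eta> ^ 4)"
    by simp
  finally show ?thesis .
qed

theorem lemma1:
  fixes s0 \<alpha> A :: real and h \<psi> :: "real \<Rightarrow> real"
  assumes s0: "s0 > 1"
    and \<alpha>: "0 < \<alpha>" "\<alpha> < 1/2"
    and h_even: "\<And>x. h (- x) = h x"
    and h_nonneg: "\<And>x. h x \<ge> 0"
    and h_bdd: "bounded (range h)"
    and h_diff: "\<And>k x. k < 4 \<Longrightarrow> (deriv ^^ k) h differentiable (at x)"
    and h_cont4: "continuous_on UNIV ((deriv ^^ 4) h)"
    and h_deriv0: "\<And>i. i \<in> {1..4} \<Longrightarrow> (deriv ^^ i) h 0 = 0"
    and h_at0: "h 0 = 1"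
    and h_pos: "\<exists>\<delta>>0. \<forall>x. \<bar>\<bar>x\<bar> - s0\<bar> < \<delta> \<longrightarrow> h x > 0"
    and h_int: "\<And>\<epsilon>. \<epsilon> > 0 \<Longrightarrow> integrable lborel (\<lambda>l. h l * (1 + \<bar>l\<bar>) powr (- \<epsilon>))"
    and \<psi>_L1: "integrable lborel \<psi>"
    and A: "A > 0"
    and supp: "\<And>l. \<bar>l\<bar> > A \<Longrightarrow> fourier \<psi> l = 0"
    and BV: "bounded_variation_on (fourier \<psi>) (- A) A"
  defines "I \<equiv> (\<lambda>\<zeta> x. LINT \<eta>|lborel. exp (\<i> * complex_of_real (\<zeta> * \<eta>)) *
              complex_of_real ((cmod (fourier \<psi> \<eta>))\<^sup>2 * h (x * \<eta>)
                 / (s0\<^sup>2 - x\<^sup>2 * \<eta>\<^sup>2) powr (2 * \<alpha>)))"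
  shows "(\<forall>\<zeta>. Cn_on 4 {- 1 / (2 * A) .. 1 / (2 * A)} (I \<zeta>)) \<and>
    (\<exists>c1>0. \<forall>\<zeta> x. \<bar>x\<bar> \<le> 1 / (2 * A) \<longrightarrow>
       cmod (I \<zeta> x
         - complex_of_real (s0 powr (- 4 * \<alpha>)) *
             (LINT \<eta>|lborel. exp (\<i> * complex_of_real (\<zeta> * \<eta>)) * complex_of_real ((cmod (fourier \<psi> \<eta>))\<^sup>2))
         - complex_of_real (2 * \<alpha> * s0 powr (- 4 * \<alpha> - 2)) *
             (LINT \<eta>|lborel. exp (\<i> * complex_of_real (\<zeta> * \<eta>)) * complex_of_real (\<eta>\<^sup>2 * (cmod (fourier \<psi> \<eta>))\<^sup>2))
             * complex_of_real (x\<^sup>2))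
       \<le> c1 * x ^ 4)"
proof -
  define g where "g \<eta> = (cmod (fourier \<psi> \<eta>))\<^sup>2" for \<eta>
  define w where "w \<zeta> \<eta> = exp (\<i> * complex_of_real (\<zeta> * \<eta>)) * complex_of_real (g \<eta>)" for \<zeta> \<eta>
  define P where "P u = h u * (s0\<^sup>2 - u\<^sup>2) powr (-2 * \<alpha>)" for u
  have g_cont: "continuous_on UNIV g"
    unfolding g_def[abs_def] using continuous_on_fourier[OF \<psi>_L1] by (intro continuous_intros)
  then have w_cont: "continuous_on {-A..A} (w \<zeta>)" for \<zeta>
    unfolding w_def[abs_def] by (auto intro!: continuous_intros elim: continuous_on_subset)
  have w_vanish: "w \<zeta> \<eta> = 0" if "\<eta> \<notin> {-A..A}" for \<zeta> \<eta>
    using supp[of \<eta>] that by (auto simp: w_def g_def)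
  have norm_w: "norm (w \<zeta> \<eta>) = g \<eta>" for \<zeta> \<eta>
    unfolding w_def norm_mult norm_exp_i_times norm_of_real by (simp add: g_def)
  have P_C4: "Ck_on 4 {-s0<..<s0} P"
    unfolding P_def[abs_def] using s0
    by (intro Ck_on_mult[OF Ck_on_subset[OF Ck_on_iterated_deriv[OF h_diff h_cont4]] Ck_on_powr_diff_square])
      auto
  have P_cont: "continuous_on {-(1/2)..1/2} P"
    using Ck_on_imp_continuous_on[OF P_C4] by (rule continuous_on_subset) (use s0 in auto)
  obtain C where C: "C \<ge> 0" "\<And>u. \<bar>u\<bar> \<le> 1/2 \<Longrightarrow>
      \<bar>P u - s0 powr (- 4 * \<alpha>) - 2 * \<alpha> * s0 powr (- 4 * \<alpha> - 2) * u\<^sup>2\<bar> \<le> C * u ^ 4"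
    using flat_mult_powr_diff_square_expansion[of "1/2" s0 h "-2 * \<alpha>"] s0 h_diff h_cont4 h_deriv0 h_at0
    by (auto simp: P_def algebra_simps)
  define G where "G = integral {-A..A} (\<lambda>\<eta>. g \<eta> * \<eta> ^ 4)"
  have "(\<lambda>\<eta>. g \<eta> * \<eta> ^ 4) integrable_on {-A..A}"
    using g_cont by (auto intro!: integrable_continuous_interval continuous_intros elim: continuous_on_subset)
  then have "C * G + 1 > 0"
    unfolding G_def using C(1) by (simp add: add_nonneg_pos integral_nonneg g_def)
  have I_eq: "I \<zeta> = (\<lambda>x. LINT \<eta>|lborel. w \<zeta> \<eta> * of_real (P (x * \<eta>)))" for \<zeta>
    unfolding I_def by (simp add: w_def g_def P_def powr_minus_divide power_mult_distrib mult.assoc)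
  have L0: "(LINT \<eta>|lborel. exp (\<i> * complex_of_real (\<zeta> * \<eta>)) * complex_of_real ((cmod (fourier \<psi> \<eta>))\<^sup>2))
      = (LINT \<eta>|lborel. w \<zeta> \<eta>)" for \<zeta>
    by (simp add: w_def g_def)
  have L2: "(LINT \<eta>|lborel. exp (\<i> * complex_of_real (\<zeta> * \<eta>)) * complex_of_real (\<eta>\<^sup>2 * (cmod (fourier \<psi> \<eta>))\<^sup>2))
      = (LINT \<eta>|lborel. w \<zeta> \<eta> * of_real (\<eta>\<^sup>2))" for \<zeta>
    by (simp add: w_def g_def mult_ac)
  have regular: "Cn_on 4 {- 1 / (2 * A) .. 1 / (2 * A)} (I \<zeta>)" for \<zeta>
    unfolding I_eq using s0 A
    by (intro Cn_on_subset_cong[OF Cn_on_lborel_integral_dilation[OF P_C4 w_cont w_vanish A]])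
      (auto simp: field_simps)
  have bound: "cmod (I \<zeta> x - complex_of_real (s0 powr (- 4 * \<alpha>)) * (LINT \<eta>|lborel. w \<zeta> \<eta>)
      - complex_of_real (2 * \<alpha> * s0 powr (- 4 * \<alpha> - 2)) * (LINT \<eta>|lborel. w \<zeta> \<eta> * of_real (\<eta>\<^sup>2))
        * complex_of_real (x\<^sup>2)) \<le> (C * G + 1) * x ^ 4" (is "?lhs \<le> _")
    if "\<bar>x\<bar> \<le> 1 / (2 * A)" for \<zeta> x
  proof -
    have "\<bar>x\<bar> * A \<le> 1/2"
      using that A by (simp add: field_simps)
    from lborel_integral_dilation_expansion_bound[OF w_cont w_vanish P_cont C(2) this]
    have "?lhs \<le> C * x ^ 4 * G"
      unfolding I_eq G_def norm_w[of \<zeta>, symmetric] .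
    also have "\<dots> \<le> (C * G + 1) * x ^ 4"
      by (simp add: algebra_simps)
    finally show ?thesis .
  qed
  show ?thesis
    unfolding L0 L2
    by (intro conjI allI impI exI[of _ "C * G + 1"] regular \<open>C * G + 1 > 0\<close>) (rule bound)
qed

end
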